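(* Let $N>0$ and $L\in\mathbb{Z}_{\ge2}$. Then $C_{L-1}(N)\le\frac12\ln\frac{L-1}{L\cdot2\pi eN}$.
   Context: $\mathcal{B}^n(y,r)$ is the closed Euclidean ball of radius $r$ centered at $y$. A set $\mathcal{C}\subseteq\mathbb{R}^n$ is an $(N,L-1)$-multiple packing ($(N,L-1)$-list-decodable code) if $|\mathcal{C}\cap\mathcal{B}^n(y,\sqrt{nN})|\le L-1$ for every $y\in\mathbb{R}^n$. Its rate is $R(\mathcal{C})=\limsup_{K\to\infty}\frac1n\ln\frac{|\mathcal{C}\cap K\mathcal{A}|}{\mathrm{vol}(K\mathcal{A})}$, where $\mathcal{A}$ is an arbitrary centrally symmetric connected compact set in $\mathbb{R}^n$ with nonempty interior (e.g. the unit ball). $C_{L-1}(N)=\limsup_{n\to\infty}\sup R(\mathcal{C})$ over all $(N,L-1)$-multiple packings $\mathcal{C}\subseteq\mathbb{R}^n$. *)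

theory Defs
  imports "HOL-Analysis.Analysis"
begin

text \<open>Euclidean n-space R^n, represented as extensional functions on the
index set {..<n} (so that the dimension n can vary inside a formula).\<close>

definition Rn :: "nat \<Rightarrow> (nat \<Rightarrow> real) set" where
  "Rn n = PiE {..<n} (\<lambda>_. UNIV)"

definition lebesgue_n :: "nat \<Rightarrow> (nat \<Rightarrow> real) measure" where
  "lebesgue_n n = PiM {..<n} (\<lambda>_. lborel)"

definition cball_n :: "nat \<Rightarrow> (nat \<Rightarrow> real) \<Rightarrow> real \<Rightarrow> (nat \<Rightarrow> real) set" where
  "cball_n n y r = {x \<in> Rn n. sqrt (\<Sum>i<n. (x i - y i)^2) \<le> r}"

definition multiple_packing :: "nat \<Rightarrow> real \<Rightarrow> nat \<Rightarrow> (nat \<Rightarrow> real) set \<Rightarrow> bool" where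
  "multiple_packing n N L C \<longleftrightarrow> C \<subseteq> Rn n \<and>
     (\<forall>y\<in>Rn n. finite (C \<inter> cball_n n y (sqrt (real n * N))) \<and>
                card (C \<inter> cball_n n y (sqrt (real n * N))) \<le> L - 1)"

text \<open>Rate of a packing, with A the closed unit ball, so K*A = B^n(0,K).
  ln 0 is read as -\<infinity> and an infinite count as +\<infinity>.\<close>

definition log_density :: "nat \<Rightarrow> (nat \<Rightarrow> real) set \<Rightarrow> real \<Rightarrow> ereal" where
  "log_density n C K =
     (let S = C \<inter> cball_n n (\<lambda>_\<in>{..<n}. 0) K in
      if infinite S then \<infinity>
      else if card S = 0 then - \<infinity>
      else ereal ((1 / real n) *
             ln (real (card S) / measure (lebesgue_n n) (cball_n n (\<lambda>_\<in>{..<n}. 0) K))))"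

definition rate :: "nat \<Rightarrow> (nat \<Rightarrow> real) set \<Rightarrow> ereal" where
  "rate n C = Limsup at_top (\<lambda>K::real. log_density n C K)"

definition list_dec_capacity :: "nat \<Rightarrow> real \<Rightarrow> ereal" where
  "list_dec_capacity L N =
     limsup (\<lambda>n. SUP C\<in>{C. multiple_packing n N L C}. rate n C)"

end

theory Submission
  imports Defs "HOL-Real_Asymp.Real_Asymp" "HOL-Library.Ramsey"
begin

text \<open>Fix \<open>\<theta> < L / (L - 1)\<close> and put \<open>\<rho> = sqrt (\<theta> n N)\<close>. Among \<open>M\<close> codewords in a ball
  of radius \<open>\<rho>\<close> around \<open>y\<close>, with \<open>M\<close> depending on \<open>L\<close> and \<open>\<theta>\<close> but not on \<open>n\<close>, Ramsey's
  theorem finds \<open>K\<close> whose pairwise inner products relative to \<open>y\<close> all lie in one short interval.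
  Since their Gram matrix is positive semidefinite, that interval cannot lie much below
  \<open>-\<rho>\<^sup>2 / (K - 1)\<close>, and then the centroid of any \<open>L\<close> of them is within \<open>sqrt (n N)\<close> of
  each, which the packing forbids. So every \<open>\<rho>\<close>-ball contains fewer than \<open>M\<close> codewords;
  double counting bounds the density by \<open>M / vol B\<^sup>n(\<rho>)\<close>, and as
  \<open>vol B\<^sup>n(\<rho>)\<^bsup>1/n\<^esup> \<sim> sqrt (2 \<pi> e \<theta> N)\<close> the rate is at most \<open>-ln (2 \<pi> e \<theta> N) / 2\<close>.
  Finally let \<open>\<theta> \<rightarrow> L / (L - 1)\<close>.\<close>

lemma space_lebesgue_n [simp]: "space (lebesgue_n n) = Rn n"
  by (simp add: lebesgue_n_def Rn_def space_PiM)

lemma sets_cball_n [measurable]: "cball_n n y r \<in> sets (lebesgue_n n)"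
proof -
  have "cball_n n y r = {x \<in> space (PiM {..<n} (\<lambda>_. lborel)). sqrt (\<Sum>i<n. (x i - y i)^2) \<le> r}"
    by (simp add: cball_n_def Rn_def space_PiM)
  also have "\<dots> \<in> sets (PiM {..<n} (\<lambda>_. lborel))" by measurable
  finally show ?thesis by (simp add: lebesgue_n_def)
qed

lemma emeasure_lborel_translate:
  assumes "A \<in> sets lborel"
  shows "emeasure lborel ((\<lambda>t. t + c) -` A) = emeasure lborel (A :: real set)"
proof -
  have "emeasure lborel A = emeasure (distr lborel borel ((+) c)) A"
    by (simp add: lborel_distr_plus)
  also have "\<dots> = emeasure lborel ((+) c -` A)"
    using assms by (subst emeasure_distr) auto
  also have "(+) c -` A = (\<lambda>t. t + c) -` A"
    by (auto simp: add.commute)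
  finally show ?thesis ..
qed

lemma distr_PiM_lborel_translate:
  fixes x :: "'i \<Rightarrow> real"
  assumes "finite I"
  shows "distr (PiM I (\<lambda>_. lborel)) (PiM I (\<lambda>_. lborel)) (\<lambda>z. \<lambda>i\<in>I. z i + x i)
           = PiM I (\<lambda>_. lborel)"
proof -
  interpret product_sigma_finite "\<lambda>_. lborel" by standard
  let ?P = "PiM I (\<lambda>_. lborel)" and ?t = "\<lambda>z. \<lambda>i\<in>I. z i + x i"
  have mt: "?t \<in> measurable ?P ?P" by measurable
  show ?thesis
  proof (rule PiM_eqI[OF assms])
    fix A :: "'i \<Rightarrow> real set" assume A: "\<And>i. i \<in> I \<Longrightarrow> A i \<in> sets lborel"
    have ms: "(\<lambda>t. t + x i) -` A i \<in> sets lborel" if "i \<in> I" for i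
      using measurable_sets[of "\<lambda>t. t + x i" lborel lborel, OF _ A[OF that]] by simp
    have "?t -` Pi\<^sub>E I A \<inter> space ?P = Pi\<^sub>E I (\<lambda>i. (\<lambda>t. t + x i) -` A i)"
      by (auto simp: space_PiM PiE_def Pi_def extensional_def)
    then have "emeasure (distr ?P ?P ?t) (Pi\<^sub>E I A)
        = emeasure ?P (Pi\<^sub>E I (\<lambda>i. (\<lambda>t. t + x i) -` A i))"
      using A by (subst emeasure_distr[OF mt]) (auto intro!: sets_PiM_I_finite assms)
    also have "\<dots> = (\<Prod>i\<in>I. emeasure lborel ((\<lambda>t. t + x i) -` A i))"
      using ms assms by (subst emeasure_PiM) auto
    also have "\<dots> = (\<Prod>i\<in>I. emeasure lborel (A i))"
      using A by (intro prod.cong) (auto simp: emeasure_lborel_translate)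
    finally show "emeasure (distr ?P ?P ?t) (Pi\<^sub>E I A) = (\<Prod>i\<in>I. emeasure lborel (A i))" .
  qed simp_all
qed

lemma emeasure_cball_n:
  assumes "r > 0"
  shows "emeasure (lebesgue_n n) (cball_n n x r) = ennreal (unit_ball_vol (real n) * r ^ n)"
proof -
  let ?P = "PiM {..<n} (\<lambda>_. lborel)" and ?t = "\<lambda>z. \<lambda>i\<in>{..<n}. z i + x i"
  have mt: "?t \<in> measurable ?P ?P" by measurable
  have pre: "?t -` cball_n n x r \<inter> space ?P = {f. sqrt (\<Sum>i\<in>{..<n}. (f i)\<^sup>2) \<le> r} \<inter> space ?P"
    by (auto simp: cball_n_def Rn_def space_PiM)
  have "emeasure (lebesgue_n n) (cball_n n x r) = emeasure (distr ?P ?P ?t) (cball_n n x r)"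
    by (simp add: distr_PiM_lborel_translate lebesgue_n_def)
  also have "\<dots> = emeasure ?P (?t -` cball_n n x r \<inter> space ?P)"
    using sets_cball_n[of n x r] by (subst emeasure_distr[OF mt]) (auto simp: lebesgue_n_def)
  also have "\<dots> = ennreal (unit_ball_vol (real (card {..<n})) * r ^ card {..<n})"
    unfolding pre using assms by (intro emeasure_cball_aux) auto
  finally show ?thesis by simp
qed

lemma measure_cball_n:
  "r > 0 \<Longrightarrow> measure (lebesgue_n n) (cball_n n x r) = unit_ball_vol (real n) * r ^ n"
  by (simp add: measure_def emeasure_cball_n)

lemma ln_fact_le: "ln (fact k :: real) \<le> (real k + 1) * ln (real k + 1) - real k"
proof (induction k)
  case 0
  then show ?case by simp
next
  case (Suc k)
  have "ln (real k + 1) - ln (real k + 2) = ln ((real k + 1) / (real k + 2))"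
    by (simp add: ln_div)
  also have "\<dots> \<le> (real k + 1) / (real k + 2) - 1"
    by (rule ln_le_minus_one) auto
  finally have step: "1 \<le> (real k + 2) * (ln (real k + 2) - ln (real k + 1))"
    by (simp add: field_simps)
  have "ln (fact (Suc k) :: real) = ln (real k + 1) + ln (fact k)"
    by (simp add: ln_mult add.commute)
  also have "\<dots> \<le> (real (Suc k) + 1) * ln (real (Suc k) + 1) - real (Suc k)"
    using Suc step by (simp add: algebra_simps)
  finally show ?case .
qed

lemma pochhammer_half_le_fact: "pochhammer (1/2 :: real) k \<le> fact k"
proof (induction k)
  case (Suc k)
  have "pochhammer (1/2 :: real) (Suc k) = pochhammer (1/2) k * (1/2 + real k)"
    by (simp add: pochhammer_Suc)
  also have "\<dots> \<le> fact k * (real k + 1)"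
    using Suc by (intro mult_mono) (auto intro: pochhammer_nonneg)
  finally show ?case by (simp add: algebra_simps)
qed simp

lemma unit_ball_vol_ge: "pi ^ (n div 2) / fact (n div 2 + 1) \<le> unit_ball_vol (real n)"
proof -
  define m where "m = n div 2"
  have "n = 2 * m \<or> n = 2 * m + 1"
    unfolding m_def by presburger
  then show ?thesis
  proof
    assume "n = 2 * m"
    have "pi ^ m / fact (m + 1) \<le> pi ^ m / (fact m :: real)"
      by (intro divide_left_mono fact_mono) auto
    also have "\<dots> = unit_ball_vol (real n)"
      using \<open>n = 2 * m\<close> unit_ball_vol_even[of m] by simp
    finally show ?thesis by (simp add: m_def)
  next
    assume "n = 2 * m + 1"
    have "pochhammer (1/2 :: real) (Suc m) > 0"
      by (rule pochhammer_pos) simp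
    then have "pi ^ m / fact (m + 1) \<le> pi ^ m / pochhammer (1/2 :: real) (Suc m)"
      using pochhammer_half_le_fact[of "Suc m"] by (intro divide_left_mono) auto
    also have "\<dots> = unit_ball_vol (real n)"
      using \<open>n = 2 * m + 1\<close> unit_ball_vol_odd'(1)[of m] by simp
    finally show ?thesis by (simp add: m_def)
  qed
qed

lemma ln_unit_ball_vol_ge:
  assumes x: "x = real n / 2"
  shows "(x - 1/2) * ln pi + x + 1/2 - (x + 2) * ln (x + 2) \<le> ln (unit_ball_vol (real n))"
proof -
  define m where "m = n div 2"
  have mx: "x - 1/2 \<le> real m" "real m \<le> x"
    unfolding x m_def by linarith+
  have "(real m + 2) * ln (real m + 2) \<le> (x + 2) * ln (x + 2)"
    using mx by (intro mult_mono) auto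
  moreover have "(x - 1/2) * ln pi \<le> real m * ln pi"
    using mx pi_gt3 by (intro mult_right_mono) auto
  ultimately have "(x - 1/2) * ln pi + x + 1/2 - (x + 2) * ln (x + 2)
      \<le> real m * ln pi + real m + 1 - (real m + 2) * ln (real m + 2)"
    using mx by linarith
  also have "\<dots> \<le> real m * ln pi - ln (fact (m + 1))"
    using ln_fact_le[of "m + 1"] by (simp add: algebra_simps)
  also have "\<dots> = ln (pi ^ m / fact (m + 1))"
    by (simp add: ln_div ln_realpow)
  also have "\<dots> \<le> ln (unit_ball_vol (real n))"
    using unit_ball_vol_ge[of n] by (simp add: m_def)
  finally show ?thesis .
qed

lemma eventually_ln_unit_ball_vol_ge:
  assumes "d > 0"
  shows "\<forall>\<^sub>F n in sequentially.
           ln (2 * pi * exp 1 / real n) / 2 - d \<le> ln (unit_ball_vol (real n)) / real n"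
proof -
  \<comment> \<open>\<open>x * E x\<close> is the gap between the bound of \<open>ln_unit_ball_vol_ge\<close> and \<open>x ln pi + x - x ln x\<close>.\<close>
  define E where "E x = ((x + 2) * ln (x + 2) - x * ln x + (ln pi - 1) / 2) / x" for x :: real
  have "(E \<longlongrightarrow> 0) at_top"
    unfolding E_def by real_asymp
  then have "\<forall>\<^sub>F x in at_top. E x < 2 * d"
    using assms by (intro order_tendstoD) auto
  moreover have "filterlim (\<lambda>n. real n / 2) at_top sequentially"
    by real_asymp
  ultimately have "\<forall>\<^sub>F n in sequentially. E (real n / 2) < 2 * d \<and> n > 0"
    by (intro eventually_conj) (auto simp: filterlim_iff)
  then show ?thesis
  proof (rule eventually_mono, safe)
    fix n :: nat assume En: "E (real n / 2) < 2 * d" and "n > 0"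
    define x where "x = real n / 2"
    have x: "x > 0"
      using \<open>n > 0\<close> by (simp add: x_def)
    have "x * E x < 2 * d * x"
      using En x by (simp add: x_def)
    moreover have "x * E x = (x + 2) * ln (x + 2) - x * ln x + ln pi / 2 - 1 / 2"
      using x by (simp add: E_def field_simps)
    moreover have "(x - 1/2) * ln pi = x * ln pi - ln pi / 2"
      by (simp add: algebra_simps)
    ultimately have lower: "x * ln pi + x - x * ln x - 2 * d * x \<le> ln (unit_ball_vol (real n))"
      using ln_unit_ball_vol_ge[OF x_def] by linarith
    have W: "ln (2 * pi * exp 1 / real n) = ln pi + 1 - ln x"
      using x by (simp add: x_def ln_div ln_mult)
    have "real n * (ln (2 * pi * exp 1 / real n) / 2 - d) = x * ln pi + x - x * ln x - 2 * d * x"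
      unfolding W by (simp add: x_def field_simps)
    with lower have "real n * (ln (2 * pi * exp 1 / real n) / 2 - d) \<le> ln (unit_ball_vol (real n))"
      by simp
    then show "ln (2 * pi * exp 1 / real n) / 2 - d \<le> ln (unit_ball_vol (real n)) / real n"
      using \<open>n > 0\<close> by (simp add: pos_le_divide_eq mult.commute)
  qed
qed

definition inner_n :: "nat \<Rightarrow> (nat \<Rightarrow> real) \<Rightarrow> (nat \<Rightarrow> real) \<Rightarrow> real" where
  "inner_n n v w = (\<Sum>i<n. v i * w i)"

lemma inner_n_commute: "inner_n n v w = inner_n n w v"
  by (simp add: inner_n_def mult.commute)

lemma abs_inner_n_le: "2 * \<bar>inner_n n v w\<bar> \<le> inner_n n v v + inner_n n w w"
proof -
  have "2 * \<bar>v i * w i\<bar> \<le> (v i)\<^sup>2 + (w i)\<^sup>2" for i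
  proof -
    have "0 \<le> (\<bar>v i\<bar> - \<bar>w i\<bar>)\<^sup>2" by simp
    then show ?thesis by (simp add: power2_diff abs_mult)
  qed
  then have "(\<Sum>i<n. 2 * \<bar>v i * w i\<bar>) \<le> (\<Sum>i<n. (v i)\<^sup>2 + (w i)\<^sup>2)"
    by (rule sum_mono)
  moreover have "2 * \<bar>inner_n n v w\<bar> \<le> (\<Sum>i<n. 2 * \<bar>v i * w i\<bar>)"
    by (simp add: inner_n_def sum_distrib_left[symmetric])
  ultimately show ?thesis
    by (simp add: inner_n_def sum.distrib power2_eq_square)
qed

lemma inner_n_self_le_of_cball:
  assumes "x \<in> cball_n n y \<rho>"
  shows "inner_n n (x - y) (x - y) \<le> \<rho>\<^sup>2"
proof -
  have "sqrt (\<Sum>i<n. (x i - y i)\<^sup>2) \<le> \<rho>"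
    using assms by (simp add: cball_n_def)
  then have "(sqrt (\<Sum>i<n. (x i - y i)\<^sup>2))\<^sup>2 \<le> \<rho>\<^sup>2"
    by (intro power_mono) (simp_all add: sum_nonneg)
  moreover have "(sqrt (\<Sum>i<n. (x i - y i)\<^sup>2))\<^sup>2 = inner_n n (x - y) (x - y)"
    by (simp add: sum_nonneg inner_n_def power2_eq_square[of "x _ - y _"])
  ultimately show ?thesis
    by simp
qed

lemma abs_inner_n_le_of_cball:
  assumes "x \<in> cball_n n y \<rho>" "z \<in> cball_n n y \<rho>"
  shows "\<bar>inner_n n (x - y) (z - y)\<bar> \<le> \<rho>\<^sup>2"
  using abs_inner_n_le[of n "x - y" "z - y"]
    inner_n_self_le_of_cball[OF assms(1)] inner_n_self_le_of_cball[OF assms(2)]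
  by linarith

lemma sum_sq_sum_eq_inner_n:
  "(\<Sum>i<n. (\<Sum>j\<in>H. u j i)\<^sup>2) = (\<Sum>j\<in>H. \<Sum>k\<in>H. inner_n n (u j) (u k))"
proof -
  have "(\<Sum>i<n. (\<Sum>j\<in>H. u j i)\<^sup>2) = (\<Sum>i<n. \<Sum>j\<in>H. \<Sum>k\<in>H. u j i * u k i)"
    by (simp add: power2_eq_square sum_product)
  also have "\<dots> = (\<Sum>j\<in>H. \<Sum>k\<in>H. \<Sum>i<n. u j i * u k i)"
    by (subst sum.swap) (subst (2) sum.swap, simp)
  finally show ?thesis by (simp add: inner_n_def)
qed

lemma inner_n_sum_right: "(\<Sum>i<n. v i * (\<Sum>j\<in>H. u j i)) = (\<Sum>j\<in>H. inner_n n v (u j))"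
  by (simp add: inner_n_def sum_distrib_left) (subst sum.swap, simp)

lemma sum_sum_diag_offdiag:
  assumes "finite H"
  shows "(\<Sum>j\<in>H. \<Sum>k\<in>H. f j k) = (\<Sum>j\<in>H. f j j) + (\<Sum>j\<in>H. \<Sum>k\<in>H - {j}. f j k)"
  using assms by (simp add: sum.remove sum.distrib)

lemma sum_Diff_singleton_le:
  assumes "finite H" "j \<in> H" "\<And>k. k \<in> H \<Longrightarrow> k \<noteq> j \<Longrightarrow> f k \<le> B"
  shows "(\<Sum>k\<in>H - {j}. f k) \<le> (real (card H) - 1) * (B :: real)"
proof -
  have "(\<Sum>k\<in>H - {j}. f k) \<le> real (card (H - {j})) * B"
    using assms(3) by (intro sum_bounded_above) auto
  moreover have "card H \<ge> 1"
    using assms(1,2) by (metis One_nat_def Suc_leI card_gt_0_iff empty_iff)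
  ultimately show ?thesis
    using assms(1,2) by simp
qed

lemma sum_Diff_singleton_ge:
  assumes "finite H" "j \<in> H" "\<And>k. k \<in> H \<Longrightarrow> k \<noteq> j \<Longrightarrow> A \<le> f k"
  shows "(real (card H) - 1) * (A :: real) \<le> (\<Sum>k\<in>H - {j}. f k)"
  using sum_Diff_singleton_le[of H j "\<lambda>k. - f k" "- A"] assms by (simp add: sum_negf)

lemma gram_offdiag_bound_ge:
  assumes H: "finite H" "2 \<le> card H"
    and diag: "\<And>j. j \<in> H \<Longrightarrow> inner_n n (u j) (u j) \<le> R"
    and off: "\<And>j k. j \<in> H \<Longrightarrow> k \<in> H \<Longrightarrow> j \<noteq> k \<Longrightarrow> inner_n n (u j) (u k) \<le> B"
  shows "- R / (real (card H) - 1) \<le> B"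
proof -
  have "0 \<le> (\<Sum>i<n. (\<Sum>j\<in>H. u j i)\<^sup>2)"
    by (intro sum_nonneg) simp
  also have "\<dots> = (\<Sum>j\<in>H. inner_n n (u j) (u j)) + (\<Sum>j\<in>H. \<Sum>k\<in>H - {j}. inner_n n (u j) (u k))"
    by (simp add: sum_sq_sum_eq_inner_n sum_sum_diag_offdiag[OF H(1)])
  also have "\<dots> \<le> real (card H) * R + (\<Sum>j\<in>H. (real (card H) - 1) * B)"
    using diag off H(1)
    by (intro add_mono sum_bounded_above sum_mono sum_Diff_singleton_le) auto
  finally have "0 \<le> real (card H) * (R + (real (card H) - 1) * B)"
    by (simp add: algebra_simps)
  then have "0 \<le> R + (real (card H) - 1) * B"
    using H(2) by (simp add: zero_le_mult_iff)
  then show ?thesis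
    using H(2) by (simp add: field_simps)
qed

lemma sum_sq_dist_centroid_le:
  assumes H: "finite H" "2 \<le> card H" "l \<in> H"
    and diag: "\<And>j. j \<in> H \<Longrightarrow> inner_n n (u j) (u j) \<le> R"
    and offA: "\<And>j k. j \<in> H \<Longrightarrow> k \<in> H \<Longrightarrow> j \<noteq> k \<Longrightarrow> A \<le> inner_n n (u j) (u k)"
    and offB: "\<And>j k. j \<in> H \<Longrightarrow> k \<in> H \<Longrightarrow> j \<noteq> k \<Longrightarrow> inner_n n (u j) (u k) \<le> B"
  shows "(\<Sum>i<n. (u l i - (\<Sum>j\<in>H. u j i) / real (card H))\<^sup>2)
           \<le> (real (card H) - 1) / real (card H) * (R - 2 * A + B)"
proof -
  define L where "L = real (card H)"
  have L: "L \<ge> 2"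
    using H(2) by (simp add: L_def)
  define s where "s i = (\<Sum>j\<in>H. u j i)" for i
  define S where "S = (\<Sum>j\<in>H - {l}. inner_n n (u l) (u j))"
  define D where "D = (\<Sum>j\<in>H. inner_n n (u j) (u j))"
  define Off where "Off = (\<Sum>j\<in>H. \<Sum>k\<in>H - {j}. inner_n n (u j) (u k))"
  have ul: "(\<Sum>i<n. (u l i)\<^sup>2) = inner_n n (u l) (u l)"
    by (simp add: inner_n_def power2_eq_square)
  have us: "(\<Sum>i<n. u l i * s i) = inner_n n (u l) (u l) + S"
    unfolding s_def inner_n_sum_right S_def using H by (simp add: sum.remove)
  have ss: "(\<Sum>i<n. (s i)\<^sup>2) = D + Off"
    unfolding s_def sum_sq_sum_eq_inner_n D_def Off_def by (rule sum_sum_diag_offdiag[OF H(1)])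
  have "(\<Sum>i<n. (u l i - s i / L)\<^sup>2)
      = (\<Sum>i<n. (u l i)\<^sup>2) - 2 / L * (\<Sum>i<n. u l i * s i) + (\<Sum>i<n. (s i)\<^sup>2) / L\<^sup>2"
    by (simp add: power2_diff power_divide sum.distrib sum_subtractf sum_distrib_left
        sum_divide_distrib algebra_simps)
  also have "\<dots> = (1 - 2 / L) * inner_n n (u l) (u l) - 2 / L * S + (D + Off) / L\<^sup>2"
    unfolding ul us ss by (simp add: algebra_simps)
  also have "\<dots> \<le> (1 - 2 / L) * R - 2 / L * ((L - 1) * A) + (L * R + L * ((L - 1) * B)) / L\<^sup>2"
  proof (intro add_mono diff_mono mult_left_mono divide_right_mono)
    show "inner_n n (u l) (u l) \<le> R" by (rule diag[OF H(3)])
    show "(L - 1) * A \<le> S"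
      unfolding S_def L_def using offA H by (intro sum_Diff_singleton_ge) auto
    show "D \<le> L * R"
      unfolding D_def L_def using diag by (intro sum_bounded_above) auto
    show "Off \<le> L * ((L - 1) * B)"
      unfolding Off_def L_def using offB H(1)
      by (intro order.trans[OF sum_mono[OF sum_Diff_singleton_le]]) auto
  qed (use L in \<open>auto simp: field_simps\<close>)
  also have "\<dots> = (L - 1) / L * (R - 2 * A + B)"
    using L by (simp add: field_simps power2_eq_square)
  finally show ?thesis
    by (simp add: L_def s_def)
qed

lemma ramsey_cluster:
  fixes a b \<eta> :: real and K :: nat
  assumes "\<eta> > 0"
  obtains M :: nat where
    "\<And>T (f :: 'a \<Rightarrow> 'a \<Rightarrow> real). finite T \<Longrightarrow> M \<le> card T \<Longrightarrow> (\<And>x y. f x y = f y x) \<Longrightarrow>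
       (\<And>x y. x \<in> T \<Longrightarrow> y \<in> T \<Longrightarrow> x \<noteq> y \<Longrightarrow> a \<le> f x y \<and> f x y \<le> b) \<Longrightarrow>
       \<exists>H\<subseteq>T. card H = K \<and> (\<exists>c. \<forall>x\<in>H. \<forall>y\<in>H. x \<noteq> y \<longrightarrow> c \<le> f x y \<and> f x y \<le> c + \<eta>)"
proof -
  define m where "m = nat \<lceil>(b - a) / \<eta>\<rceil> + 1"
  obtain M :: nat where ram: "partn_lst {..<M} (replicate m K) 2"
    using ramsey_full[of "replicate m K" 2] by blast
  show thesis
  proof (rule that[of M])
    fix T and f :: "'a \<Rightarrow> 'a \<Rightarrow> real"
    assume T: "finite T" "M \<le> card T" and sym: "\<And>x y. f x y = f y x"
      and bounds: "\<And>x y. x \<in> T \<Longrightarrow> y \<in> T \<Longrightarrow> x \<noteq> y \<Longrightarrow> a \<le> f x y \<and> f x y \<le> b"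
    obtain T' where T': "T' \<subseteq> T" "card T' = M" "finite T'"
      using obtain_subset_with_card_n[OF T(2)] by blast
    obtain g where g: "bij_betw g {..<M} T'"
      using ex_bij_betw_nat_finite[OF T'(3)] T'(2) by (auto simp: atLeast0LessThan)
    define bin where "bin j k = \<lfloor>(f (g j) (g k) - a) / \<eta>\<rfloor>" for j k
    define col where "col e = nat (bin (Min e) (Max e))" for e
    have col: "col {j, k} = nat (bin j k)" for j k
      by (cases "j \<le> k") (auto simp: col_def bin_def sym max_def min_def)
    have bin: "0 \<le> bin j k \<and> nat (bin j k) < m" if "j < M" "k < M" "j \<noteq> k" for j k
    proof -
      have "g j \<in> T" "g k \<in> T" "g j \<noteq> g k"
        using g that T'(1) by (auto simp: bij_betw_def inj_on_def)
      then have "0 \<le> (f (g j) (g k) - a) / \<eta>" "(f (g j) (g k) - a) / \<eta> \<le> (b - a) / \<eta>"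
        using bounds assms by (auto intro: divide_right_mono)
      then show ?thesis
        unfolding bin_def m_def by linarith
    qed
    have "col \<in> nsets {..<M} 2 \<rightarrow> {..<length (replicate m K)}"
      by (auto elim!: nsets2_E simp: col bin)
    then obtain i H0 where H0: "H0 \<in> nsets {..<M} K" "col ` nsets H0 2 \<subseteq> {i}"
      using ram by (fastforce simp: partn_lst_def monochromatic_def)
    have H0M: "H0 \<subseteq> {..<M}" "card H0 = K"
      using H0(1) by (auto simp: nsets_def)
    have "inj_on g H0"
      using g H0M by (auto simp: bij_betw_def intro: inj_on_subset)
    then have "card (g ` H0) = K"
      using H0M by (simp add: card_image)
    moreover have "g ` H0 \<subseteq> T"
      using g H0M T'(1) by (auto simp: bij_betw_def)
    moreover have "a + real i * \<eta> \<le> f x y \<and> f x y \<le> (a + real i * \<eta>) + \<eta>"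
      if xy: "x \<in> g ` H0" "y \<in> g ` H0" "x \<noteq> y" for x y
    proof -
      obtain j k where jk: "j \<in> H0" "k \<in> H0" "x = g j" "y = g k"
        using xy(1,2) by blast
      with xy(3) have "j \<noteq> k" by blast
      with jk have "{j, k} \<in> nsets H0 2"
        by simp
      then have "col {j, k} = i"
        using H0(2) by blast
      then have "bin j k = int i"
        using bin[of j k] jk \<open>j \<noteq> k\<close> H0M(1) by (auto simp: col subset_iff)
      then have "real i \<le> (f x y - a) / \<eta>" "(f x y - a) / \<eta> < real i + 1"
        unfolding bin_def jk by linarith+
      then show ?thesis
        using assms by (simp add: field_simps)
    qed
    ultimately show "\<exists>H\<subseteq>T. card H = K \<and> (\<exists>c. \<forall>x\<in>H. \<forall>y\<in>H. x \<noteq> y \<longrightarrow> c \<le> f x y \<and> f x y \<le> c + \<eta>)"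
      by blast
  qed
qed

lemma multiple_packing_no_cluster:
  assumes mp: "multiple_packing n N L C" and L: "2 \<le> L" "L \<le> card H"
    and H: "finite H" "H \<subseteq> C \<inter> cball_n n y \<rho>"
    and pairs: "\<And>x z. x \<in> H \<Longrightarrow> z \<in> H \<Longrightarrow> x \<noteq> z \<Longrightarrow>
                  c \<le> inner_n n (x - y) (z - y) \<and> inner_n n (x - y) (z - y) \<le> c + \<delta>"
    and small: "(real L - 1) / real L * (\<rho>\<^sup>2 + \<rho>\<^sup>2 / (real (card H) - 1) + 2 * \<delta>) \<le> real n * N"
  shows False
proof -
  have diag: "inner_n n (x - y) (x - y) \<le> \<rho>\<^sup>2" if "x \<in> H" for x
    using H(2) that inner_n_self_le_of_cball by blast
  have gram: "- \<rho>\<^sup>2 / (real (card H) - 1) \<le> c + \<delta>"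
    using L pairs by (intro gram_offdiag_bound_ge[OF H(1), of n "\<lambda>x. x - y"] diag) auto
  obtain H' where H': "H' \<subseteq> H" "card H' = L" "finite H'"
    using obtain_subset_with_card_n[OF L(2)] by blast
  define cen where "cen = (\<lambda>i\<in>{..<n}. y i + (\<Sum>z\<in>H'. z i - y i) / real L)"
  have sub: "H' \<subseteq> C \<inter> cball_n n cen (sqrt (real n * N))"
  proof
    fix x assume x: "x \<in> H'"
    have "(\<Sum>i<n. (x i - cen i)\<^sup>2)
        = (\<Sum>i<n. ((x - y) i - (\<Sum>z\<in>H'. (z - y) i) / real (card H'))\<^sup>2)"
      by (intro sum.cong) (auto simp: cen_def H'(2) algebra_simps)
    also have "\<dots> \<le> (real L - 1) / real L * (\<rho>\<^sup>2 - 2 * c + (c + \<delta>))"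
      using sum_sq_dist_centroid_le[OF H'(3), of x n "\<lambda>x. x - y" "\<rho>\<^sup>2" c "c + \<delta>"]
        x H' L diag pairs by (auto simp: subset_iff)
    also have "\<dots> \<le> (real L - 1) / real L * (\<rho>\<^sup>2 + \<rho>\<^sup>2 / (real (card H) - 1) + 2 * \<delta>)"
      using gram L by (intro mult_left_mono) auto
    also have "\<dots> \<le> real n * N"
      by (rule small)
    finally have "sqrt (\<Sum>i<n. (x i - cen i)\<^sup>2) \<le> sqrt (real n * N)"
      by simp
    then show "x \<in> C \<inter> cball_n n cen (sqrt (real n * N))"
      using x H'(1) H(2) by (auto simp: cball_n_def)
  qed
  have "cen \<in> Rn n"
    by (simp add: cen_def Rn_def)
  then have fin: "finite (C \<inter> cball_n n cen (sqrt (real n * N)))"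
    and le: "card (C \<inter> cball_n n cen (sqrt (real n * N))) \<le> L - 1"
    using mp unfolding multiple_packing_def by auto
  have "L \<le> L - 1"
    using card_mono[OF fin sub] H'(2) le by simp
  then show False
    using L by simp
qed

lemma exists_cluster_parameters:
  assumes L: "2 \<le> L" and \<theta>: "0 < \<theta>" "\<theta> < real L / (real L - 1)"
  obtains K :: nat and \<eta> :: real where "L \<le> K" "0 < \<eta>"
    "(real L - 1) / real L * \<theta> * (1 + 1 / (real K - 1) + 2 * \<eta>) \<le> 1"
proof -
  define s where "s = real L / ((real L - 1) * \<theta>) - 1"
  have s: "s > 0"
    using L \<theta> by (simp add: s_def field_simps)
  define K where "K = max L (nat \<lceil>2 / s\<rceil> + 1)"
  have K: "L \<le> K" "2 / s \<le> real K - 1"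
    unfolding K_def by linarith+
  have "1 / (real K - 1) \<le> s / 2"
    using K s L by (simp add: field_simps)
  then have "1 + 1 / (real K - 1) + 2 * (s / 4) \<le> 1 + s"
    by simp
  also have "1 + s = real L / ((real L - 1) * \<theta>)"
    by (simp add: s_def)
  finally have "(real L - 1) / real L * \<theta> * (1 + 1 / (real K - 1) + 2 * (s / 4))
      \<le> (real L - 1) / real L * \<theta> * (real L / ((real L - 1) * \<theta>))"
    using L \<theta> by (intro mult_left_mono) auto
  also have "\<dots> = 1"
    using L \<theta> by (simp add: field_simps)
  finally show thesis
    using K s by (intro that[of K "s / 4"]) auto
qed

lemma multiple_packing_ball_count_bounded:
  assumes L: "2 \<le> L" and \<theta>: "0 < \<theta>" "\<theta> < real L / (real L - 1)"
  obtains M :: nat where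
    "\<And>n N C y T. 0 < n \<Longrightarrow> 0 < N \<Longrightarrow> multiple_packing n N L C \<Longrightarrow> finite T \<Longrightarrow>
       T \<subseteq> C \<inter> cball_n n y (sqrt (\<theta> * real n * N)) \<Longrightarrow> card T < M"
proof -
  obtain K \<eta> where K: "L \<le> K" and \<eta>: "0 < \<eta>"
    and scale: "(real L - 1) / real L * \<theta> * (1 + 1 / (real K - 1) + 2 * \<eta>) \<le> 1"
    using exists_cluster_parameters[OF L \<theta>] by blast
  from \<eta> show thesis
  proof (rule ramsey_cluster[where 'a = "nat \<Rightarrow> real" and a = "-1" and b = 1 and K = K])
    fix M :: nat
    assume M: "\<And>T (f :: (nat \<Rightarrow> real) \<Rightarrow> (nat \<Rightarrow> real) \<Rightarrow> real). finite T \<Longrightarrow> M \<le> card T \<Longrightarrow>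
       (\<And>x z. f x z = f z x) \<Longrightarrow> (\<And>x z. x \<in> T \<Longrightarrow> z \<in> T \<Longrightarrow> x \<noteq> z \<Longrightarrow> -1 \<le> f x z \<and> f x z \<le> 1) \<Longrightarrow>
       \<exists>H\<subseteq>T. card H = K \<and> (\<exists>c. \<forall>x\<in>H. \<forall>z\<in>H. x \<noteq> z \<longrightarrow> c \<le> f x z \<and> f x z \<le> c + \<eta>)"
    show thesis
    proof (rule that[of M])
      fix n N C y T
      assume n: "0 < n" and N: "0 < N" and mp: "multiple_packing n N L C"
        and T: "finite T" "T \<subseteq> C \<inter> cball_n n y (sqrt (\<theta> * real n * N))"
      define \<rho> where "\<rho> = sqrt (\<theta> * real n * N)"
      have \<rho>: "\<rho>\<^sup>2 = \<theta> * real n * N" "\<rho>\<^sup>2 > 0"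
        using n N \<theta> by (simp_all add: \<rho>_def)
      \<comment> \<open>normalised so that the Ramsey bound \<open>M\<close> does not depend on \<open>n\<close>\<close>
      define f where "f x z = inner_n n (x - y) (z - y) / \<rho>\<^sup>2" for x z
      show "card T < M"
      proof (rule ccontr)
        assume "\<not> card T < M"
        moreover have "-1 \<le> f x z \<and> f x z \<le> 1" if "x \<in> T" "z \<in> T" for x z
        proof -
          have "\<bar>inner_n n (x - y) (z - y)\<bar> \<le> \<rho>\<^sup>2"
            using T(2) that by (intro abs_inner_n_le_of_cball) (auto simp: \<rho>_def)
          then show ?thesis
            using \<rho>(2) by (simp add: f_def abs_le_iff field_simps)
        qed
        ultimately obtain H c where H: "H \<subseteq> T" "card H = K"
          and c: "\<And>x z. x \<in> H \<Longrightarrow> z \<in> H \<Longrightarrow> x \<noteq> z \<Longrightarrow> c \<le> f x z \<and> f x z \<le> c + \<eta>"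
          using M[OF T(1), of f] by (force simp: f_def inner_n_commute)
        show False
        proof (rule multiple_packing_no_cluster[OF mp L(1)])
          show "L \<le> card H" "finite H" "H \<subseteq> C \<inter> cball_n n y \<rho>"
            using H K T by (auto simp: \<rho>_def intro: finite_subset)
          show "c * \<rho>\<^sup>2 \<le> inner_n n (x - y) (z - y) \<and> inner_n n (x - y) (z - y) \<le> c * \<rho>\<^sup>2 + \<eta> * \<rho>\<^sup>2"
            if "x \<in> H" "z \<in> H" "x \<noteq> z" for x z
            using c[OF that] \<rho>(2) by (simp add: f_def field_simps)
          have "(real L - 1) / real L * (\<rho>\<^sup>2 + \<rho>\<^sup>2 / (real K - 1) + 2 * (\<eta> * \<rho>\<^sup>2))
              = (real L - 1) / real L * \<theta> * (1 + 1 / (real K - 1) + 2 * \<eta>) * (real n * N)"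
            unfolding \<rho>(1) by (simp add: field_simps)
          also have "\<dots> \<le> real n * N"
            using mult_right_mono[OF scale, of "real n * N"] N by simp
          finally show "(real L - 1) / real L * (\<rho>\<^sup>2 + \<rho>\<^sup>2 / (real (card H) - 1) + 2 * (\<eta> * \<rho>\<^sup>2))
              \<le> real n * N"
            using H(2) by simp
        qed
      qed
    qed
  qed
qed

lemma cball_n_commute: "x \<in> Rn n \<Longrightarrow> z \<in> Rn n \<Longrightarrow> z \<in> cball_n n x r \<longleftrightarrow> x \<in> cball_n n z r"
  by (simp add: cball_n_def power2_commute)

lemma cball_n_triangle:
  assumes "z \<in> cball_n n x r" "x \<in> cball_n n w K"
  shows "z \<in> cball_n n w (K + r)"
proof -
  have "L2_set (\<lambda>i. (z i - x i) + (x i - w i)) {..<n}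
      \<le> L2_set (\<lambda>i. z i - x i) {..<n} + L2_set (\<lambda>i. x i - w i) {..<n}"
    by (rule L2_set_triangle_ineq)
  then show ?thesis
    using assms by (simp add: cball_n_def L2_set_def)
qed

lemma sum_indicator_cball_n_le:
  assumes S: "finite S" "S \<subseteq> cball_n n w K" and z: "z \<in> Rn n"
    and local: "card (S \<inter> cball_n n z \<rho>) \<le> M"
  shows "(\<Sum>x\<in>S. indicator (cball_n n x \<rho>) z) \<le> (of_nat M * indicator (cball_n n w (K + \<rho>)) z :: ennreal)"
proof -
  have SR: "S \<subseteq> Rn n"
    using S(2) by (auto simp: cball_n_def)
  have "(\<Sum>x\<in>S. indicator (cball_n n x \<rho>) z :: ennreal) = (\<Sum>x\<in>S. indicator (cball_n n z \<rho>) x)"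
    using SR z by (intro sum.cong refl) (auto simp: indicator_def cball_n_commute)
  also have "\<dots> = (\<Sum>x\<in>S \<inter> cball_n n z \<rho>. 1)"
    by (subst sum.inter_restrict[OF S(1)]) (simp add: indicator_def of_bool_def)
  finally have count: "(\<Sum>x\<in>S. indicator (cball_n n x \<rho>) z :: ennreal)
      = of_nat (card (S \<inter> cball_n n z \<rho>))"
    by simp
  show ?thesis
  proof (cases "z \<in> cball_n n w (K + \<rho>)")
    case True
    then show ?thesis
      using count local by simp
  next
    case False
    have "S \<inter> cball_n n z \<rho> = {}"
    proof (rule ccontr)
      assume "S \<inter> cball_n n z \<rho> \<noteq> {}"
      then obtain x where x: "x \<in> S" "x \<in> cball_n n z \<rho>"
        by blast
      then have "z \<in> cball_n n x \<rho>"
        using SR z cball_n_commute by blast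
      then have "z \<in> cball_n n w (K + \<rho>)"
        using x S(2) by (blast intro: cball_n_triangle)
      with False show False ..
    qed
    then show ?thesis
      using count False by simp
  qed
qed

text \<open>Double counting: integrating the number of points of \<open>S\<close> within distance \<open>\<rho>\<close> of \<open>z\<close>
  over all \<open>z\<close> gives \<open>card S\<close> times the volume of a \<open>\<rho>\<close>-ball.\<close>

lemma card_le_of_local_count:
  assumes \<rho>: "\<rho> > 0" and K: "K > 0" and S: "finite S" "S \<subseteq> cball_n n w K"
    and local: "\<And>z. z \<in> Rn n \<Longrightarrow> card (S \<inter> cball_n n z \<rho>) \<le> M"
  shows "real (card S) * \<rho> ^ n \<le> real M * (K + \<rho>) ^ n"
proof -
  let ?P = "lebesgue_n n" and ?V = "unit_ball_vol (real n)"
  have "ennreal (real (card S) * (?V * \<rho> ^ n)) = (\<Sum>x\<in>S. emeasure ?P (cball_n n x \<rho>))"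
    using \<rho> by (simp add: emeasure_cball_n ennreal_of_nat_eq_real_of_nat ennreal_mult)
  also have "\<dots> = (\<integral>\<^sup>+ z. (\<Sum>x\<in>S. indicator (cball_n n x \<rho>) z) \<partial>?P)"
    by (subst nn_integral_sum) auto
  also have "\<dots> \<le> (\<integral>\<^sup>+ z. of_nat M * indicator (cball_n n w (K + \<rho>)) z \<partial>?P)"
    using S local by (intro nn_integral_mono sum_indicator_cball_n_le) auto
  also have "\<dots> = ennreal (real M * (?V * (K + \<rho>) ^ n))"
    using K \<rho> by (simp add: nn_integral_cmult emeasure_cball_n ennreal_of_nat_eq_real_of_nat ennreal_mult)
  finally have "?V * (real (card S) * \<rho> ^ n) \<le> ?V * (real M * (K + \<rho>) ^ n)"
    using K \<rho> by (subst (asm) ennreal_le_iff) (auto simp: algebra_simps)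
  then show ?thesis
    by simp
qed

lemma finite_card_cball_n_le_of_local_count:
  assumes \<rho>: "0 < \<rho>" and K: "0 < K"
    and local: "\<And>z T. z \<in> Rn n \<Longrightarrow> finite T \<Longrightarrow> T \<subseteq> C \<inter> cball_n n z \<rho> \<Longrightarrow> card T \<le> M"
  shows "finite (C \<inter> cball_n n w K)"
    and "real (card (C \<inter> cball_n n w K)) * \<rho> ^ n \<le> real M * (K + \<rho>) ^ n"
proof -
  have count: "real (card S) * \<rho> ^ n \<le> real M * (K + \<rho>) ^ n"
    if S: "finite S" "S \<subseteq> C \<inter> cball_n n w K" for S
  proof (rule card_le_of_local_count[OF \<rho> K S(1)])
    show "S \<subseteq> cball_n n w K"
      using S(2) by blast
    show "card (S \<inter> cball_n n z \<rho>) \<le> M" if "z \<in> Rn n" for z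
      using local[of z "S \<inter> cball_n n z \<rho>"] that S by auto
  qed
  show fin: "finite (C \<inter> cball_n n w K)"
  proof (rule ccontr)
    assume "infinite (C \<inter> cball_n n w K)"
    then obtain S where S: "S \<subseteq> C \<inter> cball_n n w K" "finite S"
      "card S = nat \<lceil>real M * (K + \<rho>) ^ n / \<rho> ^ n\<rceil> + 1"
      using infinite_arbitrarily_large by blast
    have "real (card S) \<le> real M * (K + \<rho>) ^ n / \<rho> ^ n"
      using count[OF S(2,1)] \<rho> by (simp add: field_simps)
    then show False
      using S(3) by linarith
  qed
  show "real (card (C \<inter> cball_n n w K)) * \<rho> ^ n \<le> real M * (K + \<rho>) ^ n"
    using count[OF fin] by simp
qed

lemma log_density_le_of_local_count:
  assumes n: "0 < n" and \<rho>: "0 < \<rho>" and K: "0 < K"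
    and local: "\<And>z T. z \<in> Rn n \<Longrightarrow> finite T \<Longrightarrow> T \<subseteq> C \<inter> cball_n n z \<rho> \<Longrightarrow> card T \<le> M"
  shows "log_density n C K
           \<le> ereal (ln (real M) / real n - ln (unit_ball_vol (real n)) / real n - ln \<rho> + ln (1 + \<rho> / K))"
proof -
  define S where "S = C \<inter> cball_n n (\<lambda>_\<in>{..<n}. 0) K"
  define V where "V = unit_ball_vol (real n)"
  have fin: "finite S"
    unfolding S_def by (rule finite_card_cball_n_le_of_local_count(1)[OF \<rho> K]) (rule local)
  have cnt: "real (card S) * \<rho> ^ n \<le> real M * (K + \<rho>) ^ n"
    unfolding S_def by (rule finite_card_cball_n_le_of_local_count(2)[OF \<rho> K]) (rule local)
  show ?thesis
  proof (cases "card S = 0")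
    case True
    then show ?thesis
      using fin unfolding log_density_def Let_def S_def[symmetric] by simp
  next
    case False
    then have pos: "0 < real (card S) * \<rho> ^ n"
      using \<rho> by simp
    then have "0 < real M * (K + \<rho>) ^ n"
      using cnt by linarith
    then have M: "0 < real M"
      using K \<rho> by (simp add: zero_less_mult_iff)
    have V: "0 < V" and "0 < 1 + \<rho> / K"
      using K \<rho> by (simp_all add: V_def add_pos_pos)
    have q: "(1 + \<rho> / K) ^ n = (K + \<rho>) ^ n / K ^ n"
      using K by (simp add: power_divide[symmetric] add_divide_distrib)
    have "real (card S) / (V * K ^ n) = real (card S) * \<rho> ^ n / (V * K ^ n * \<rho> ^ n)"
      using \<rho> by simp
    also have "\<dots> \<le> real M * (K + \<rho>) ^ n / (V * K ^ n * \<rho> ^ n)"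
      using cnt V K \<rho> by (intro divide_right_mono) auto
    also have "\<dots> = real M * (1 + \<rho> / K) ^ n / (V * \<rho> ^ n)"
      unfolding q by (simp add: mult.commute mult.left_commute)
    finally have "ln (real (card S) / (V * K ^ n)) \<le> ln (real M * (1 + \<rho> / K) ^ n / (V * \<rho> ^ n))"
      using False V K by (intro ln_mono) auto
    also have "\<dots> = ln (real M) - ln V - real n * ln \<rho> + real n * ln (1 + \<rho> / K)"
      using M V \<open>0 < 1 + \<rho> / K\<close> \<rho> by (simp add: ln_div ln_mult ln_realpow)
    finally have "1 / real n * ln (real (card S) / (V * K ^ n))
        \<le> ln (real M) / real n - ln V / real n - ln \<rho> + ln (1 + \<rho> / K)"
      using n by (simp add: field_simps)
    moreover have "log_density n C K = ereal (1 / real n * ln (real (card S) / (V * K ^ n)))"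
      using False fin K unfolding log_density_def Let_def S_def[symmetric]
      by (simp add: measure_cball_n V_def)
    ultimately show ?thesis
      by (simp add: V_def)
  qed
qed

lemma rate_le_of_local_count:
  assumes n: "0 < n" and \<rho>: "0 < \<rho>"
    and local: "\<And>z T. z \<in> Rn n \<Longrightarrow> finite T \<Longrightarrow> T \<subseteq> C \<inter> cball_n n z \<rho> \<Longrightarrow> card T \<le> M"
  shows "rate n C \<le> ereal (ln (real M) / real n - ln (unit_ball_vol (real n)) / real n - ln \<rho>)"
proof -
  define c where "c = ln (real M) / real n - ln (unit_ball_vol (real n)) / real n - ln \<rho>"
  have "rate n C \<le> Limsup at_top (\<lambda>K. ereal (c + ln (1 + \<rho> / K)))"
    unfolding rate_def c_def using n \<rho> local
    by (intro Limsup_mono eventually_mono[OF eventually_gt_at_top[of 0]] log_density_le_of_local_count)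
  also have "\<dots> = ereal c"
  proof (rule lim_imp_Limsup)
    have "((\<lambda>K. c + ln (1 + \<rho> / K)) \<longlongrightarrow> c) at_top"
      by real_asymp
    then show "((\<lambda>K. ereal (c + ln (1 + \<rho> / K))) \<longlongrightarrow> ereal c) at_top"
      by (rule tendsto_ereal)
  qed simp
  finally show ?thesis
    by (simp add: c_def)
qed

lemma eventually_multiple_packing_rate_le:
  assumes N: "0 < N" and L: "2 \<le> L" and e: "0 < e"
  shows "\<forall>\<^sub>F n in sequentially. \<forall>C. multiple_packing n N L C \<longrightarrow>
           rate n C \<le> ereal (1/2 * ln ((real L - 1) / (real L * 2 * pi * exp 1 * N)) + e)"
proof -
  define A where "A = (real L - 1) / (real L * 2 * pi * exp 1 * N)"
  define \<theta> where "\<theta> = real L / (real L - 1) * exp (- e)"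
  have A: "0 < A"
    using L N by (simp add: A_def)
  have "real L / (real L - 1) * exp (- e) < real L / (real L - 1) * 1"
    using L e by (intro mult_strict_left_mono) auto
  then have \<theta>: "0 < \<theta>" "\<theta> < real L / (real L - 1)"
    using L by (simp_all add: \<theta>_def)
  have target: "- ln (2 * pi * exp 1 * \<theta> * N) / 2 = 1/2 * ln A + e / 2"
  proof -
    have "2 * pi * exp 1 * \<theta> * N = exp (- e) / A"
      using L N by (simp add: A_def \<theta>_def field_simps)
    then show ?thesis
      using A by (simp add: ln_div)
  qed
  obtain M :: nat where M: "\<And>n N C y T. 0 < n \<Longrightarrow> 0 < N \<Longrightarrow> multiple_packing n N L C \<Longrightarrow>
      finite T \<Longrightarrow> T \<subseteq> C \<inter> cball_n n y (sqrt (\<theta> * real n * N)) \<Longrightarrow> card T < M"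
    using multiple_packing_ball_count_bounded[OF L \<theta>] by blast
  have "((\<lambda>n. ln (real M) / real n) \<longlongrightarrow> 0) sequentially"
    by real_asymp
  then have "\<forall>\<^sub>F n in sequentially. ln (real M) / real n < e / 4"
    using e by (intro order_tendstoD) auto
  moreover have "\<forall>\<^sub>F n in sequentially.
      ln (2 * pi * exp 1 / real n) / 2 - e / 4 \<le> ln (unit_ball_vol (real n)) / real n"
    using e by (intro eventually_ln_unit_ball_vol_ge) auto
  ultimately show ?thesis
    using eventually_gt_at_top[of 0]
  proof eventually_elim
    case (elim n)
    show ?case
    proof (intro allI impI)
      fix C assume mp: "multiple_packing n N L C"
      define \<rho> where "\<rho> = sqrt (\<theta> * real n * N)"
      have \<rho>: "0 < \<rho>"
        using \<theta> N elim by (simp add: \<rho>_def)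
      have rate: "rate n C \<le> ereal (ln (real M) / real n - ln (unit_ball_vol (real n)) / real n - ln \<rho>)"
        using M[OF elim(3) N mp] \<rho> elim(3) unfolding \<rho>_def
        by (intro rate_le_of_local_count) (auto simp: less_imp_le)
      have "ln (2 * pi * exp 1 * \<theta> * N) = ln (2 * pi * exp 1 / real n) + 2 * ln \<rho>"
        using \<theta> N elim(3) by (simp add: \<rho>_def ln_sqrt ln_mult ln_div add_divide_distrib)
      then have "ln (real M) / real n - ln (unit_ball_vol (real n)) / real n - ln \<rho> \<le> 1/2 * ln A + e"
        using elim(1,2) target by linarith
      then show "rate n C \<le> ereal (1/2 * ln ((real L - 1) / (real L * 2 * pi * exp 1 * N)) + e)"
        using rate unfolding A_def by (simp add: order_trans)
    qed
  qed
qed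

theorem mainTheorem17:
  fixes N :: real and L :: nat
  assumes "N > 0" and "L \<ge> 2"
  shows "list_dec_capacity L N \<le>
           ereal (1/2 * ln ((real L - 1) / (real L * 2 * pi * exp 1 * N)))"
proof (rule ereal_le_epsilon2)
  fix e :: real
  assume "0 < e"
  have "list_dec_capacity L N \<le> ereal (1/2 * ln ((real L - 1) / (real L * 2 * pi * exp 1 * N)) + e)"
    unfolding list_dec_capacity_def
    using eventually_multiple_packing_rate_le[OF assms \<open>0 < e\<close>]
    by (intro Limsup_bounded) (auto elim!: eventually_mono intro!: SUP_least)
  then show "list_dec_capacity L N \<le> ereal (1/2 * ln ((real L - 1) / (real L * 2 * pi * exp 1 * N))) + ereal e"
    by simp
qed

end
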